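(* Let $X$ be an FK-space containing $\phi$ and suppose that $\lim_{n\to\infty}\frac{q(n)-i+1}{q(n)-p(n)}=1$ for each $i$. Then: (i) $X^{\beta}\subseteq X^{d}\subseteq X^{d[b]}\subseteq X^f$; (ii) if $X$ is a $\sigma_p^q[K]$-space then $X^f=X^d$; (iii) if $X$ is an AD-space then $X^{d[b]}=X^d$.
   Context: An FK-space is a vector subspace of the space $w$ of all complex sequences with a complete metrizable locally convex topology in which coordinate functionals are continuous; $X'$ is its continuous dual. $\delta^j$ has $1$ in position $j$ and $0$ elsewhere; $\phi=\operatorname{span}\{\delta^j\}$. $p(n)<q(n)$ are nonnegative integer sequences with $q(n)\to\infty$. $\sigma_p^q[s]=\{x : \lim_n\frac{1}{q(n)-p(n)}\sum_{k=p(n)+1}^{q(n)}\sum_{j=1}^k x_j\text{ exists}\}$, $\sigma_p^q[b]=\{x:\sup_n|\frac{1}{q(n)-p(n)}\sum_{k=p(n)+1}^{q(n)}\sum_{j=1}^k x_j|<\infty\}$. For $x,y\in w$, $x\cdot y=(x_ny_n)$. Duals: $X^f=\{(f(\delta^k))_k : f\in X'\}$; $X^\beta=\{x : \sum_k x_ky_k \text{ converges for all } y\in X\}$; $X^d=\{x : x\cdot y\in\sigma_p^q[s]\ \forall y\in X\}$; $X^{d[b]}=\{x : x\cdot y\in\sigma_p^q[b]\ \forall y\in X\}$. $X$ is an AD-space if $\phi$ is dense in $X$. With $x^{(k)}=\sum_{j=1}^k x_j\delta^j$, $X$ is a $\sigma_p^q[K]$-space if $\frac{1}{q(n)-p(n)}\sum_{k=p(n)+1}^{q(n)}x^{(k)}\to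 x$ in $X$ for every $x\in X$. *)

theory Defs
  imports "HOL-Analysis.Analysis"
begin

text \<open>Sequences are indexed from 0: the paper's coordinate x_j (j \<ge> 1) is x (j - 1).
  So the partial sum of the first k terms is the sum over j < k.\<close>

type_synonym seq = "nat \<Rightarrow> complex"

definition delta :: "nat \<Rightarrow> seq" where
  "delta j = (\<lambda>i. if i = j then 1 else 0)"

definition sscale :: "complex \<Rightarrow> seq \<Rightarrow> seq" where
  "sscale c x = (\<lambda>i. c * x i)"

definition sadd :: "seq \<Rightarrow> seq \<Rightarrow> seq" where
  "sadd x y = (\<lambda>i. x i + y i)"

definition szero :: seq where
  "szero = (\<lambda>i. 0)"

definition phi :: "seq set" where
  "phi = {x. \<exists>F c. finite F \<and> x = (\<lambda>i. \<Sum>j\<in>F. c j * delta j i)}"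

definition is_subspace_w :: "seq set \<Rightarrow> bool" where
  "is_subspace_w X \<longleftrightarrow> szero \<in> X \<and> (\<forall>x\<in>X. \<forall>y\<in>X. sadd x y \<in> X)
     \<and> (\<forall>c. \<forall>x\<in>X. sscale c x \<in> X)"

definition convex_w :: "seq set \<Rightarrow> bool" where
  "convex_w V \<longleftrightarrow> (\<forall>x\<in>V. \<forall>y\<in>V. \<forall>t::real. 0 \<le> t \<and> t \<le> 1 \<longrightarrow>
      (\<lambda>i. complex_of_real t * x i + complex_of_real (1 - t) * y i) \<in> V)"

definition lc_tvs :: "seq set \<Rightarrow> seq topology \<Rightarrow> bool" where
  "lc_tvs X T \<longleftrightarrow> is_subspace_w X \<and> topspace T = X
     \<and> continuous_map (prod_topology T T) T (\<lambda>(x, y). sadd x y)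
     \<and> continuous_map (prod_topology (euclidean :: complex topology) T) T (\<lambda>(c, x). sscale c x)
     \<and> (\<forall>U. openin T U \<and> szero \<in> U \<longrightarrow> (\<exists>V. openin T V \<and> szero \<in> V \<and> V \<subseteq> U \<and> convex_w V))"

definition FK_space :: "seq set \<Rightarrow> seq topology \<Rightarrow> bool" where
  "FK_space X T \<longleftrightarrow> lc_tvs X T \<and> completely_metrizable_space T
     \<and> (\<forall>j. continuous_map T (euclidean :: complex topology) (\<lambda>x. x j))"

definition cdual :: "seq set \<Rightarrow> seq topology \<Rightarrow> (seq \<Rightarrow> complex) set" where
  "cdual X T = {f. (\<forall>x\<in>X. \<forall>y\<in>X. f (sadd x y) = f x + f y)
                 \<and> (\<forall>c. \<forall>x\<in>X. f (sscale c x) = c * f x)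
                 \<and> continuous_map T (euclidean :: complex topology) f}"

definition f_dual :: "seq set \<Rightarrow> seq topology \<Rightarrow> seq set" where
  "f_dual X T = {(\<lambda>k. f (delta k)) | f. f \<in> cdual X T}"

definition beta_dual :: "seq set \<Rightarrow> seq set" where
  "beta_dual X = {x. \<forall>y\<in>X. summable (\<lambda>k. x k * y k)}"

definition dmean :: "(nat \<Rightarrow> nat) \<Rightarrow> (nat \<Rightarrow> nat) \<Rightarrow> seq \<Rightarrow> nat \<Rightarrow> complex" where
  "dmean p q x n = (1 / of_nat (q n - p n)) * (\<Sum>k\<in>{p n<..q n}. \<Sum>j<k. x j)"

definition sigma_s :: "(nat \<Rightarrow> nat) \<Rightarrow> (nat \<Rightarrow> nat) \<Rightarrow> seq set" where
  "sigma_s p q = {x. convergent (dmean p q x)}"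

definition sigma_b :: "(nat \<Rightarrow> nat) \<Rightarrow> (nat \<Rightarrow> nat) \<Rightarrow> seq set" where
  "sigma_b p q = {x. bdd_above (range (\<lambda>n. norm (dmean p q x n)))}"

definition smult :: "seq \<Rightarrow> seq \<Rightarrow> seq" where
  "smult x y = (\<lambda>n. x n * y n)"

definition d_dual :: "(nat \<Rightarrow> nat) \<Rightarrow> (nat \<Rightarrow> nat) \<Rightarrow> seq set \<Rightarrow> seq set" where
  "d_dual p q X = {x. \<forall>y\<in>X. smult x y \<in> sigma_s p q}"

definition db_dual :: "(nat \<Rightarrow> nat) \<Rightarrow> (nat \<Rightarrow> nat) \<Rightarrow> seq set \<Rightarrow> seq set" where
  "db_dual p q X = {x. \<forall>y\<in>X. smult x y \<in> sigma_b p q}"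

definition AD_space :: "seq set \<Rightarrow> seq topology \<Rightarrow> bool" where
  "AD_space X T \<longleftrightarrow> T closure_of phi = topspace T"

definition sect :: "seq \<Rightarrow> nat \<Rightarrow> seq" where
  "sect x k = (\<lambda>i. if i < k then x i else 0)"

definition sigmaK_space :: "(nat \<Rightarrow> nat) \<Rightarrow> (nat \<Rightarrow> nat) \<Rightarrow> seq set \<Rightarrow> seq topology \<Rightarrow> bool" where
  "sigmaK_space p q X T \<longleftrightarrow> (\<forall>x\<in>X. limitin T
     (\<lambda>n. (\<lambda>i. (1 / of_nat (q n - p n)) * (\<Sum>k\<in>{p n<..q n}. sect x k i))) x sequentially)"

end

theory Submission
  imports Defs
begin

text \<open>The hypothesis on p and q enters only through its consequence that the window lengths
  q n - p n tend to infinity. Window means of a convergent sequence then converge to its limit,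
  so every summable product x \<cdot> y is summable by the means; this gives X^beta \<subseteq> X^d.

  For x in X^d[b], the functionals f_n y = dmean (x \<cdot> y) n are continuous on the FK-space X and
  pointwise bounded, so by the Baire category theorem they are uniformly bounded on a
  neighbourhood of 0, i.e. equicontinuous. A cluster point of (f_n) in the product topology
  (Tychonoff) is again linear and bounded near 0, hence continuous, and it maps delta^k to
  lim f_n delta^k = x_k; so x lies in X^f.

  In a sigma[K]-space a functional f in X' maps the window means of the sections of y, which
  tend to y, to dmean ((f delta^k)_k \<cdot> y) n; hence X^f \<subseteq> X^d. In an AD-space the equicontinuous
  (f_n) converge on the dense set phi of finitely supported sequences, hence everywhere; so
  X^d[b] \<subseteq> X^d.\<close>

lemma window_mean_tendsto:
  fixes S :: "nat \<Rightarrow> 'a::real_normed_field"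
  assumes S: "S \<longlonglongrightarrow> s" and len: "filterlim (\<lambda>n. q n - p n) at_top sequentially"
  shows "(\<lambda>n. (1 / of_nat (q n - p n)) * (\<Sum>k\<in>{p n<..q n}. S k)) \<longlonglongrightarrow> s"
proof -
  define d where "d n = real (q n - p n)" for n
  have d: "filterlim d at_top sequentially"
    unfolding d_def by (rule filterlim_compose[OF filterlim_real_sequentially len])
  have "(\<lambda>n. (1 / of_nat (q n - p n)) * (\<Sum>k\<in>{p n<..q n}. S k - s)) \<longlonglongrightarrow> 0"
  proof (rule LIMSEQ_I)
    fix \<epsilon> :: real assume "\<epsilon> > 0"
    then obtain N where N: "\<And>k. k \<ge> N \<Longrightarrow> norm (S k - s) < \<epsilon> / 2"
      using LIMSEQ_D[OF S, of "\<epsilon> / 2"] by auto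
    define C where "C = (\<Sum>k<N. norm (S k - s))"
    have "\<forall>\<^sub>F n in sequentially. max 0 (2 * C / \<epsilon>) < d n"
      using d unfolding filterlim_at_top_dense by blast
    then obtain n0 where n0: "\<And>n. n \<ge> n0 \<Longrightarrow> max 0 (2 * C / \<epsilon>) < d n"
      unfolding eventually_sequentially by blast
    have "norm ((1 / of_nat (q n - p n)) * (\<Sum>k\<in>{p n<..q n}. S k - s)) < \<epsilon>" if "n \<ge> n0" for n
    proof -
      have dpos: "d n > 0" and dC: "2 * C < d n * \<epsilon>"
        using n0[OF that] \<open>\<epsilon> > 0\<close> by (auto simp: field_simps)
      have "norm (\<Sum>k\<in>{p n<..q n}. S k - s) \<le> (\<Sum>k\<in>{p n<..q n}. norm (S k - s))"
        by (rule norm_sum)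
      also have "\<dots> \<le> (\<Sum>k\<in>{p n<..q n}. (if k < N then norm (S k - s) else 0) + \<epsilon> / 2)"
        using N \<open>\<epsilon> > 0\<close> by (intro sum_mono) (auto simp: not_less less_imp_le)
      also have "\<dots> = (\<Sum>k\<in>{p n<..q n} \<inter> {..<N}. norm (S k - s)) + d n * (\<epsilon> / 2)"
        by (simp add: sum.distrib sum.inter_restrict d_def)
      also have "\<dots> \<le> C + d n * (\<epsilon> / 2)"
        unfolding C_def by (intro add_right_mono sum_mono2) auto
      finally have "norm (\<Sum>k\<in>{p n<..q n}. S k - s) \<le> C + d n * (\<epsilon> / 2)" .
      moreover have "norm (1 / of_nat (q n - p n) :: 'a) = 1 / d n"
        by (simp add: norm_divide d_def del: of_nat_diff)
      ultimately have "norm ((1 / of_nat (q n - p n)) * (\<Sum>k\<in>{p n<..q n}. S k - s)) \<le> (C + d n * (\<epsilon> / 2)) / d n"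
        using dpos by (simp only: norm_mult) (simp add: divide_right_mono)
      also have "\<dots> < \<epsilon>"
        using dpos dC by (simp add: field_simps)
      finally show ?thesis .
    qed
    then show "\<exists>n0. \<forall>n\<ge>n0. norm ((1 / of_nat (q n - p n)) * (\<Sum>k\<in>{p n<..q n}. S k - s) - 0) < \<epsilon>"
      by auto
  qed
  then have "(\<lambda>n. (1 / of_nat (q n - p n)) * (\<Sum>k\<in>{p n<..q n}. S k - s) + s) \<longlonglongrightarrow> 0 + s"
    by (intro tendsto_add tendsto_const)
  moreover have "\<forall>\<^sub>F n in sequentially. (1 / of_nat (q n - p n)) * (\<Sum>k\<in>{p n<..q n}. S k - s) + s
      = (1 / of_nat (q n - p n)) * (\<Sum>k\<in>{p n<..q n}. S k)"
    using len unfolding filterlim_at_top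
    by (rule eventually_mono[OF spec[of _ 1]]) (simp add: sum_subtractf field_simps)
  ultimately show ?thesis
    by (simp add: tendsto_cong)
qed

lemma dmean_tendsto_suminf:
  assumes "filterlim (\<lambda>n. q n - p n) at_top sequentially" and "summable y"
  shows "dmean p q y \<longlonglongrightarrow> suminf y"
  unfolding dmean_def by (rule window_mean_tendsto[OF summable_LIMSEQ[OF assms(2)] assms(1)])

lemma window_length_tendsto:
  assumes pq: "\<forall>n. p n < q n" and qinf: "filterlim q at_top sequentially"
    and lim: "\<forall>i\<ge>1. (\<lambda>n. (real (q n) - real i + 1) / (real (q n) - real (p n))) \<longlonglongrightarrow> 1"
  shows "filterlim (\<lambda>n. q n - p n) at_top sequentially"
  unfolding filterlim_at_top
proof
  fix Z :: nat
  have "(\<lambda>n. real (q n) / (real (q n) - real (p n))) \<longlonglongrightarrow> 1"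
    using lim[rule_format, of 1] by simp
  then have "\<forall>\<^sub>F n in sequentially. real (q n) / (real (q n) - real (p n)) < 2"
    by (rule order_tendstoD) simp
  moreover have "\<forall>\<^sub>F n in sequentially. 2 * Z \<le> q n"
    using qinf by (simp add: filterlim_at_top)
  ultimately show "\<forall>\<^sub>F n in sequentially. Z \<le> q n - p n"
  proof eventually_elim
    case (elim n)
    with pq have "real (2 * p n) < real (q n)"
      by (simp add: divide_less_eq)
    then have "2 * p n < q n"
      by (simp only: of_nat_less_iff)
    with elim show ?case
      by arith
  qed
qed

lemma dmean_smult_delta_tendsto:
  assumes "filterlim (\<lambda>n. q n - p n) at_top sequentially"
  shows "(\<lambda>n. dmean p q (smult x (delta k)) n) \<longlonglongrightarrow> x k"
proof -
  have "smult x (delta k) sums x k"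
    using sums_single[of k x] by (simp add: smult_def delta_def if_distrib cong: if_cong)
  then show ?thesis
    using dmean_tendsto_suminf[OF assms] by (metis sums_summable sums_unique)
qed

lemma bounded_imp_cluster_function:
  fixes f :: "nat \<Rightarrow> 'a \<Rightarrow> 'b::{real_normed_vector, heine_borel}"
  assumes bounded: "\<And>n y. norm (f n y) \<le> B y"
  shows "\<exists>g. \<forall>C. closed C \<longrightarrow> (\<forall>\<^sub>F n in sequentially. f n \<in> C) \<longrightarrow> g \<in> C"
proof -
  have "compact (Pi\<^sub>E UNIV (\<lambda>y. cball (0::'b) (B y)))"
    using compactin_PiE[of "\<lambda>_. euclidean" UNIV "\<lambda>y. cball (0::'b) (B y)"]
    by (simp add: euclidean_product_topology)
  moreover have "\<forall>\<^sub>F k in filtermap f sequentially. k \<in> Pi\<^sub>E UNIV (\<lambda>y. cball 0 (B y))"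
    using bounded by (simp add: eventually_filtermap PiE_UNIV_domain)
  ultimately obtain g where g: "inf (nhds g) (filtermap f sequentially) \<noteq> bot"
    unfolding compact_filter by (metis filtermap_bot_iff sequentially_bot)
  show ?thesis
  proof (intro exI allI impI)
    fix C assume "closed C" and "\<forall>\<^sub>F n in sequentially. f n \<in> C"
    show "g \<in> C"
    proof (rule ccontr)
      assume "g \<notin> C"
      then have "\<forall>\<^sub>F k in nhds g. k \<notin> C"
        using \<open>closed C\<close> eventually_nhds_in_open[of "- C" g] by auto
      with \<open>\<forall>\<^sub>F n in sequentially. f n \<in> C\<close>
      have "\<forall>\<^sub>F k in inf (nhds g) (filtermap f sequentially). False"
        unfolding eventually_inf by (fastforce simp: eventually_filtermap)
      with g show False by (simp add: eventually_False)
    qed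
  qed
qed

lemma cluster_function_tendsto:
  fixes f :: "nat \<Rightarrow> 'a \<Rightarrow> 'b::metric_space"
  assumes g: "\<forall>C. closed C \<longrightarrow> (\<forall>\<^sub>F n in sequentially. f n \<in> C) \<longrightarrow> g \<in> C"
    and lim: "(\<lambda>n. f n y) \<longlonglongrightarrow> L"
  shows "g y = L"
proof -
  have "g \<in> {k. dist (k y) L \<le> \<epsilon>}" if "\<epsilon> > 0" for \<epsilon>
  proof (rule g[rule_format])
    show "closed {k :: 'a \<Rightarrow> 'b. dist (k y) L \<le> \<epsilon>}"
      by (rule closed_Collect_le) (intro continuous_intros continuous_on_product_coordinates)+
    show "\<forall>\<^sub>F n in sequentially. f n \<in> {k. dist (k y) L \<le> \<epsilon>}"
      by (intro eventually_mono[OF tendstoD[OF lim \<open>\<epsilon> > 0\<close>]]) simp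
  qed
  then have "dist (g y) L \<le> 0"
    using field_le_epsilon[of "dist (g y) L" 0] by simp
  then show ?thesis
    by simp
qed

lemma continuous_map_mult_left [continuous_intros]:
  fixes f :: "'a \<Rightarrow> 'b::real_normed_algebra"
  shows "continuous_map X euclidean f \<Longrightarrow> continuous_map X euclidean (\<lambda>x. c * f x)"
  by (simp add: continuous_map_atin tendsto_mult_left)

definition lin_functional :: "seq set \<Rightarrow> (seq \<Rightarrow> complex) \<Rightarrow> bool" where
  "lin_functional X f \<longleftrightarrow>
    (\<forall>x\<in>X. \<forall>y\<in>X. f (sadd x y) = f x + f y) \<and> (\<forall>c. \<forall>x\<in>X. f (sscale c x) = c * f x)"

lemma cdual_iff: "f \<in> cdual X T \<longleftrightarrow> lin_functional X f \<and> continuous_map T euclidean f"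
  by (auto simp: cdual_def lin_functional_def)

lemma lin_functional_affine:
  assumes "lin_functional X f" "is_subspace_w X" "y \<in> X" "a \<in> X"
  shows "f (sadd (sscale c y) a) = c * f y + f a"
  using assms by (simp add: lin_functional_def is_subspace_w_def)

lemma closed_lin_functional: "closed {f :: seq \<Rightarrow> complex. lin_functional X f}"
proof -
  have "{f. lin_functional X f} = (\<Inter>x\<in>X. \<Inter>y\<in>X. {f :: seq \<Rightarrow> complex. f (sadd x y) = f x + f y})
      \<inter> (\<Inter>c. \<Inter>x\<in>X. {f. f (sscale c x) = c * f x})"
    by (auto simp: lin_functional_def)
  also have "closed \<dots>"
    by (intro closed_Int closed_INT ballI closed_Collect_eq continuous_intros
        continuous_on_product_coordinates)
  finally show ?thesis .
qed

lemma delta_in_phi: "delta j \<in> phi"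
  unfolding phi_def by (intro CollectI exI[of _ "{j}"] exI[of _ "\<lambda>_. 1"]) simp

lemma summable_smult_phi:
  assumes "z \<in> phi"
  shows "summable (smult x z)"
proof -
  obtain F c where "finite F" and z: "z = (\<lambda>i. \<Sum>j\<in>F. c j * delta j i)"
    using assms unfolding phi_def by blast
  have "smult x z i = 0" if "i \<notin> F" for i
    using that \<open>finite F\<close> by (simp add: z smult_def delta_def if_distrib cong: if_cong)
  with \<open>finite F\<close> show ?thesis
    by (rule summable_finite)
qed

lemma lin_functional_delta_sum:
  assumes X: "is_subspace_w X" "phi \<subseteq> X" and f: "lin_functional X f" and "finite F"
  shows "(\<lambda>i. \<Sum>a\<in>F. c a * delta (e a) i) \<in> X
    \<and> f (\<lambda>i. \<Sum>a\<in>F. c a * delta (e a) i) = (\<Sum>a\<in>F. c a * f (delta (e a)))"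
  using \<open>finite F\<close>
proof (induction F rule: finite_induct)
  case empty
  have "(\<lambda>i. \<Sum>a\<in>{}. c a * delta (e a) i) = sscale 0 szero"
    by (simp add: szero_def sscale_def)
  with X f show ?case
    by (simp add: is_subspace_w_def lin_functional_def)
next
  case (insert a F)
  have "(\<lambda>i. \<Sum>a\<in>insert a F. c a * delta (e a) i)
      = sadd (sscale (c a) (delta (e a))) (\<lambda>i. \<Sum>a\<in>F. c a * delta (e a) i)"
    using insert by (simp add: sadd_def sscale_def)
  moreover have "delta (e a) \<in> X"
    using X(2) delta_in_phi by blast
  ultimately show ?case
    using insert lin_functional_affine[OF f X(1)] X(1) by (simp add: is_subspace_w_def)
qed

lemma sect_eq_delta_sum: "sect y k = (\<lambda>i. \<Sum>j<k. y j * delta j i)"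
  by (simp add: sect_def delta_def if_distrib cong: if_cong)

lemma lin_functional_section_mean:
  assumes "is_subspace_w X" "phi \<subseteq> X" and h: "lin_functional X h"
  shows "h (\<lambda>i. (1 / of_nat (q n - p n)) * (\<Sum>k\<in>{p n<..q n}. sect y k i))
    = dmean p q (smult (\<lambda>k. h (delta k)) y) n"
proof -
  define S where "S = Sigma {p n<..q n} (\<lambda>k. {..<k})"
  define c where "c a = (1 / of_nat (q n - p n)) * y (snd a)" for a :: "nat \<times> nat"
  have "finite S"
    unfolding S_def by (intro finite_SigmaI) auto
  have "(\<lambda>i. (1 / of_nat (q n - p n)) * (\<Sum>k\<in>{p n<..q n}. sect y k i))
      = (\<lambda>i. \<Sum>a\<in>S. c a * delta (snd a) i)"
    unfolding sect_eq_delta_sum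
    by (auto simp: S_def c_def sum_distrib_left sum.Sigma split_beta mult.assoc)
  then have "h (\<lambda>i. (1 / of_nat (q n - p n)) * (\<Sum>k\<in>{p n<..q n}. sect y k i))
      = (\<Sum>a\<in>S. c a * h (delta (snd a)))"
    using lin_functional_delta_sum[OF assms \<open>finite S\<close>] by simp
  also have "\<dots> = dmean p q (smult (\<lambda>k. h (delta k)) y) n"
    by (auto simp: dmean_def smult_def S_def c_def sum_distrib_left sum.Sigma split_beta
        mult.assoc mult.commute)
  finally show ?thesis .
qed

context
  fixes X :: "seq set" and T :: "seq topology"
  assumes FK: "FK_space X T"
begin

lemma FK_topspace: "topspace T = X"
  using FK by (simp add: FK_space_def lc_tvs_def)

lemma FK_subspace: "is_subspace_w X"
  using FK by (simp add: FK_space_def lc_tvs_def)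

lemma FK_szero: "szero \<in> X"
  using FK_subspace by (simp add: is_subspace_w_def)

lemma FK_continuous_affine:
  assumes "a \<in> X"
  shows "continuous_map T T (\<lambda>y. sadd (sscale c y) a)"
proof -
  have "continuous_map T (prod_topology euclidean T) (\<lambda>y. (c, y))"
    by (intro continuous_map_pairedI) auto
  then have "continuous_map T T (\<lambda>y. sscale c y)"
    using continuous_map_compose FK by (fastforce simp: FK_space_def lc_tvs_def o_def)
  then have "continuous_map T (prod_topology T T) (\<lambda>y. (sscale c y, a))"
    using assms FK_topspace by (intro continuous_map_pairedI) auto
  then show ?thesis
    using continuous_map_compose FK by (fastforce simp: FK_space_def lc_tvs_def o_def)
qed

lemma equicontinuous_if_bounded_near_zero:
  assumes V: "openin T V" "szero \<in> V"
    and G: "\<And>g. g \<in> G \<Longrightarrow> lin_functional X g" "\<And>g v. g \<in> G \<Longrightarrow> v \<in> V \<Longrightarrow> norm (g v) \<le> M"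
    and y0: "y0 \<in> X" and "\<epsilon> > 0"
  shows "\<exists>U. openin T U \<and> y0 \<in> U \<and> (\<forall>g\<in>G. \<forall>y\<in>U. norm (g y - g y0) < \<epsilon>)"
proof -
  define r where "r = (\<bar>M\<bar> + 1) / \<epsilon>"
  have r: "r > 0" using \<open>\<epsilon> > 0\<close> by (simp add: r_def add_pos_nonneg)
  define a where "a = sscale (- of_real r) y0"
  have a: "a \<in> X" using FK_subspace y0 by (simp add: a_def is_subspace_w_def)
  define U where "U = {y \<in> topspace T. sadd (sscale (of_real r) y) a \<in> V}"
  have "openin T U"
    unfolding U_def by (rule openin_continuous_map_preimage[OF FK_continuous_affine[OF a] V(1)])
  moreover have "y0 \<in> U"
    using y0 V(2) FK_topspace by (simp add: U_def a_def sadd_def sscale_def szero_def)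
  moreover have "norm (g y - g y0) < \<epsilon>" if g: "g \<in> G" and y: "y \<in> U" for g y
  proof -
    have "y \<in> X" using y FK_topspace by (simp add: U_def)
    then have "g (sadd (sscale (of_real r) y) a) = of_real r * g y + g a"
      by (rule lin_functional_affine[OF G(1)[OF g] FK_subspace _ a])
    moreover have "g a = - of_real r * g y0"
      using G(1)[OF g] y0 by (simp add: lin_functional_def a_def)
    ultimately have "g (sadd (sscale (of_real r) y) a) = of_real r * (g y - g y0)"
      by (simp add: algebra_simps)
    then have "r * norm (g y - g y0) \<le> \<bar>M\<bar>"
      using G(2)[OF g, of "sadd (sscale (of_real r) y) a"] y r by (auto simp: U_def norm_mult)
    then have "norm (g y - g y0) \<le> \<bar>M\<bar> / r"
      using r by (simp add: field_simps)
    also have "\<dots> < \<epsilon>"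
      using \<open>\<epsilon> > 0\<close> by (simp add: r_def field_simps)
    finally show ?thesis .
  qed
  ultimately show ?thesis by blast
qed

lemma continuous_if_bounded_near_zero:
  assumes "lin_functional X g" "openin T V" "szero \<in> V" "\<And>v. v \<in> V \<Longrightarrow> norm (g v) \<le> M"
  shows "continuous_map T euclidean g"
  unfolding mtopology_is_euclidean[symmetric] Met_TC.continuous_map_to_metric mball_eq_ball
proof (intro ballI allI impI)
  fix y0 \<epsilon> assume "y0 \<in> topspace T" "(\<epsilon>::real) > 0"
  then obtain U where "openin T U" "y0 \<in> U" "\<forall>y\<in>U. norm (g y - g y0) < \<epsilon>"
    using equicontinuous_if_bounded_near_zero[of V "{g}" M y0 \<epsilon>] assms FK_topspace by auto
  then show "\<exists>U. openin T U \<and> y0 \<in> U \<and> (\<forall>y\<in>U. g y \<in> ball (g y0) \<epsilon>)"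
    by (auto simp: dist_norm norm_minus_commute)
qed

lemma convergent_if_equibounded_and_convergent_on_dense:
  assumes f: "\<And>n. lin_functional X (f n)"
    and V: "openin T V" "szero \<in> V" and M: "\<And>n v. v \<in> V \<Longrightarrow> norm (f n v) \<le> M"
    and D: "\<And>z. z \<in> D \<Longrightarrow> convergent (\<lambda>n. f n z)" and y: "y \<in> T closure_of D"
  shows "convergent (\<lambda>n. f n y)"
  unfolding Cauchy_convergent_iff[symmetric]
proof (rule metric_CauchyI)
  fix \<epsilon> :: real assume "\<epsilon> > 0"
  have "y \<in> X"
    using y closure_of_subset_topspace[of T D] FK_topspace by blast
  then have "\<exists>U. openin T U \<and> y \<in> U \<and> (\<forall>g\<in>range f. \<forall>u\<in>U. norm (g u - g y) < \<epsilon> / 3)"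
    using f M \<open>\<epsilon> > 0\<close> by (intro equicontinuous_if_bounded_near_zero[OF V]) auto
  then obtain U where "openin T U" "y \<in> U"
    and U: "\<forall>g\<in>range f. \<forall>u\<in>U. norm (g u - g y) < \<epsilon> / 3"
    by blast
  with y obtain z where "z \<in> D" "z \<in> U"
    unfolding in_closure_of by blast
  then obtain N where N: "\<forall>m\<ge>N. \<forall>n\<ge>N. dist (f m z) (f n z) < \<epsilon> / 3"
    using metric_CauchyD[of "\<lambda>n. f n z" "\<epsilon> / 3"] D \<open>\<epsilon> > 0\<close> Cauchy_convergent_iff by auto
  have close: "dist (f k y) (f k z) < \<epsilon> / 3" for k
    using U \<open>z \<in> U\<close> by (metis dist_commute dist_norm rangeI)
  have "dist (f m y) (f n y) < \<epsilon>" if "m \<ge> N" "n \<ge> N" for m n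
  proof -
    have "dist (f m z) (f n z) < \<epsilon> / 3"
      using N that by blast
    then show ?thesis
      using dist_triangle[of "f m y" "f n y" "f m z"] dist_triangle[of "f m z" "f n y" "f n z"]
        close[of m] close[of n] dist_commute[of "f n z" "f n y"] by linarith
  qed
  then show "\<exists>N. \<forall>m\<ge>N. \<forall>n\<ge>N. dist (f m y) (f n y) < \<epsilon>"
    by blast
qed

lemma uniform_boundedness:
  assumes f: "\<And>n. f n \<in> cdual X T"
    and bdd: "\<And>y. y \<in> X \<Longrightarrow> bdd_above (range (\<lambda>n. norm (f n y)))"
  shows "\<exists>V M. openin T V \<and> szero \<in> V \<and> (\<forall>n. \<forall>v\<in>V. norm (f n v) \<le> M)"
proof -
  define A where "A m = (\<Inter>n. {y \<in> topspace T. f n y \<in> cball 0 (real m)})" for m :: nat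
  have "closedin T (A m)" for m
    unfolding A_def using f
    by (intro closedin_INT closedin_continuous_map_preimage) (auto simp: cdual_iff)
  moreover have "topspace T = (\<Union>m. A m)"
  proof (intro equalityI subsetI)
    fix y assume "y \<in> topspace T"
    moreover obtain B where "\<And>n. norm (f n y) \<le> B"
      using bdd[of y] \<open>y \<in> topspace T\<close> FK_topspace by (auto simp: bdd_above_def)
    moreover obtain m where "B \<le> real m"
      using real_arch_simple by blast
    ultimately show "y \<in> (\<Union>m. A m)"
      by (auto simp: A_def intro: order_trans)
  qed (auto simp: A_def)
  moreover have "T interior_of topspace T \<noteq> {}"
    using FK_szero FK_topspace by (metis empty_iff interior_of_topspace)
  ultimately obtain m where "T interior_of A m \<noteq> {}"
    using Baire_category_alt[of T "range A"] FK by (auto simp: FK_space_def)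
  then obtain y0 where y0: "y0 \<in> T interior_of A m"
    by blast
  have y0X: "y0 \<in> X"
    using y0 interior_of_subset_topspace[of T "A m"] FK_topspace by blast
  define V where "V = {v \<in> topspace T. sadd (sscale 1 v) y0 \<in> T interior_of A m}"
  have "openin T V"
    unfolding V_def by (rule openin_continuous_map_preimage[OF FK_continuous_affine[OF y0X]]) simp
  moreover have "szero \<in> V"
    using y0 FK_szero FK_topspace by (simp add: V_def sadd_def sscale_def szero_def)
  moreover have "norm (f n v) \<le> 2 * real m" if "v \<in> V" for n v
  proof -
    have lin: "lin_functional X (f n)"
      using f by (simp add: cdual_iff)
    have "f n (sadd (sscale 1 v) y0) = f n v + f n y0"
      using lin_functional_affine[OF lin FK_subspace _ y0X] that FK_topspace by (simp add: V_def)
    moreover have "norm (f n (sadd (sscale 1 v) y0)) \<le> real m" and "norm (f n y0) \<le> real m"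
      using that y0 interior_of_subset[of T "A m"] by (auto simp: V_def A_def)
    ultimately show ?thesis
      by (metis add_diff_cancel_right' norm_triangle_ineq4 mult_2 add_mono order_trans)
  qed
  ultimately show ?thesis
    by blast
qed

lemma pointwise_bounded_cdual_cluster_point:
  assumes f: "\<And>n. f n \<in> cdual X T"
    and bdd: "\<And>y. y \<in> X \<Longrightarrow> bdd_above (range (\<lambda>n. norm (f n y)))"
  shows "\<exists>g\<in>cdual X T. \<forall>y\<in>X. \<forall>L. (\<lambda>n. f n y) \<longlonglongrightarrow> L \<longrightarrow> g y = L"
proof -
  obtain V M where V: "openin T V" "szero \<in> V" and M: "\<And>n v. v \<in> V \<Longrightarrow> norm (f n v) \<le> M"
    using uniform_boundedness[OF f bdd] by blast
  have VX: "V \<subseteq> X"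
    using openin_subset[OF V(1)] FK_topspace by simp
  have lin: "lin_functional X (f n)" for n
    using f by (simp add: cdual_iff)
  txt \<open>Masking the values outside X makes the sequence bounded everywhere. Linearity on X
    and the bound on V are closed conditions in the product topology, so they pass from the
    \<open>h n\<close> to their cluster point g.\<close>
  define h where "h n y = (if y \<in> X then f n y else 0)" for n y
  have "norm (h n y) \<le> (if y \<in> X then (SUP n. norm (f n y)) else 0)" for n y
    using cSUP_upper[OF _ bdd] by (simp add: h_def)
  then have "\<exists>g. \<forall>C. closed C \<longrightarrow> (\<forall>\<^sub>F n in sequentially. h n \<in> C) \<longrightarrow> g \<in> C"
    by (rule bounded_imp_cluster_function)
  then obtain g where g: "\<And>C. closed C \<Longrightarrow> \<forall>\<^sub>F n in sequentially. h n \<in> C \<Longrightarrow> g \<in> C"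
    by blast
  have "g \<in> {k. lin_functional X k}"
  proof (rule g)
    show "\<forall>\<^sub>F n in sequentially. h n \<in> {k. lin_functional X k}"
      using lin FK_subspace by (simp add: h_def lin_functional_def is_subspace_w_def)
  qed (rule closed_lin_functional)
  then have lin_g: "lin_functional X g"
    by simp
  have "g \<in> (\<Inter>v\<in>V. {k. norm (k v) \<le> M})"
  proof (rule g)
    show "closed (\<Inter>v\<in>V. {k :: seq \<Rightarrow> complex. norm (k v) \<le> M})"
      by (intro closed_INT ballI closed_Collect_le continuous_intros continuous_on_product_coordinates)
    show "\<forall>\<^sub>F n in sequentially. h n \<in> (\<Inter>v\<in>V. {k. norm (k v) \<le> M})"
      using M VX by (auto simp: h_def)
  qed
  then have "continuous_map T euclidean g"
    by (intro continuous_if_bounded_near_zero[OF lin_g V]) blast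
  moreover have "g y = L" if "y \<in> X" and "(\<lambda>n. f n y) \<longlonglongrightarrow> L" for y L
    using that by (intro cluster_function_tendsto[of h g]) (simp_all add: g h_def)
  ultimately show ?thesis
    using lin_g by (intro bexI[of _ g]) (simp_all add: cdual_iff)
qed

lemma dmean_smult_in_cdual: "(\<lambda>y. dmean p q (smult x y) n) \<in> cdual X T"
proof -
  have "continuous_map T euclidean (\<lambda>y. dmean p q (smult x y) n)"
    unfolding dmean_def smult_def using FK
    by (intro continuous_intros) (auto simp: FK_space_def)
  moreover have "lin_functional X (\<lambda>y. dmean p q (smult x y) n)"
    by (simp add: lin_functional_def dmean_def smult_def sadd_def sscale_def sum.distrib
        sum_distrib_left distrib_left mult.left_commute add_divide_distrib)
  ultimately show ?thesis
    by (simp add: cdual_iff)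
qed

end

lemma beta_dual_subset_d_dual:
  assumes "filterlim (\<lambda>n. q n - p n) at_top sequentially"
  shows "beta_dual X \<subseteq> d_dual p q X"
  using dmean_tendsto_suminf[OF assms]
  by (auto simp: beta_dual_def d_dual_def sigma_s_def smult_def convergent_def)

lemma d_dual_subset_db_dual: "d_dual p q X \<subseteq> db_dual p q X"
  unfolding d_dual_def db_dual_def sigma_s_def sigma_b_def
  by (auto intro!: Bseq_bdd_above' convergent_imp_Bseq)

lemma db_dual_subset_f_dual:
  assumes FK: "FK_space X T" and "phi \<subseteq> X"
    and len: "filterlim (\<lambda>n. q n - p n) at_top sequentially"
  shows "db_dual p q X \<subseteq> f_dual X T"
proof
  fix x assume "x \<in> db_dual p q X"
  then obtain g where g: "g \<in> cdual X T"
    and lim: "\<forall>y\<in>X. \<forall>L. (\<lambda>n. dmean p q (smult x y) n) \<longlonglongrightarrow> L \<longrightarrow> g y = L"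
    using pointwise_bounded_cdual_cluster_point[OF FK, of "\<lambda>n y. dmean p q (smult x y) n"]
      dmean_smult_in_cdual[OF FK] by (auto simp: db_dual_def sigma_b_def)
  have "g (delta k) = x k" for k
    using lim dmean_smult_delta_tendsto[OF len] delta_in_phi \<open>phi \<subseteq> X\<close> by blast
  then have "x = (\<lambda>k. g (delta k))"
    by simp
  with g show "x \<in> f_dual X T"
    unfolding f_dual_def by blast
qed

lemma f_dual_subset_d_dual:
  assumes FK: "FK_space X T" and "phi \<subseteq> X" and K: "sigmaK_space p q X T"
  shows "f_dual X T \<subseteq> d_dual p q X"
proof
  fix x assume "x \<in> f_dual X T"
  then obtain h where h: "h \<in> cdual X T" and x: "x = (\<lambda>k. h (delta k))"
    unfolding f_dual_def by blast
  have "convergent (dmean p q (smult x y))" if "y \<in> X" for y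
  proof -
    define M where "M n = (\<lambda>i. (1 / of_nat (q n - p n)) * (\<Sum>k\<in>{p n<..q n}. sect y k i))" for n
    have "limitin T M y sequentially"
      using K \<open>y \<in> X\<close> unfolding sigmaK_space_def M_def by blast
    then have "(\<lambda>n. h (M n)) \<longlonglongrightarrow> h y"
      using continuous_map_limit[of T euclidean h] h by (auto simp: cdual_iff o_def)
    moreover have "h (M n) = dmean p q (smult x y) n" for n
      unfolding M_def x
      using lin_functional_section_mean[OF FK_subspace[OF FK] \<open>phi \<subseteq> X\<close>] h
      by (simp add: cdual_iff)
    ultimately show ?thesis
      unfolding convergent_def by auto
  qed
  then show "x \<in> d_dual p q X"
    by (simp add: d_dual_def sigma_s_def)
qed

lemma db_dual_subset_d_dual:
  assumes FK: "FK_space X T" and "phi \<subseteq> X" and AD: "AD_space X T"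
    and len: "filterlim (\<lambda>n. q n - p n) at_top sequentially"
  shows "db_dual p q X \<subseteq> d_dual p q X"
proof
  fix x assume "x \<in> db_dual p q X"
  define f where "f n y = dmean p q (smult x y) n" for n y
  have f: "f n \<in> cdual X T" for n
    unfolding f_def by (rule dmean_smult_in_cdual[OF FK])
  obtain V M where V: "openin T V" "szero \<in> V" and M: "\<forall>n. \<forall>v\<in>V. norm (f n v) \<le> M"
    using uniform_boundedness[OF FK, of f] f \<open>x \<in> db_dual p q X\<close>
    by (auto simp: db_dual_def sigma_b_def f_def)
  have "convergent (\<lambda>n. f n y)" if "y \<in> X" for y
  proof (rule convergent_if_equibounded_and_convergent_on_dense[OF FK, where f = f and D = phi, OF _ V])
    show "lin_functional X (f n)" for n
      using f by (simp add: cdual_iff)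
    show "convergent (\<lambda>n. f n z)" if "z \<in> phi" for z
      using dmean_tendsto_suminf[OF len summable_smult_phi[OF that]]
      by (auto simp: f_def convergent_def)
    show "y \<in> T closure_of phi"
      using AD \<open>y \<in> X\<close> FK_topspace[OF FK] by (simp add: AD_space_def)
  qed (use M in auto)
  then show "x \<in> d_dual p q X"
    by (simp add: d_dual_def sigma_s_def f_def)
qed

theorem mainTheorem5:
  fixes X :: "seq set" and T :: "seq topology" and p q :: "nat \<Rightarrow> nat"
  assumes FK: "FK_space X T"
    and phiX: "phi \<subseteq> X"
    and pq: "\<forall>n. p n < q n"
    and qinf: "filterlim q at_top sequentially"
    and lim: "\<forall>i\<ge>1. (\<lambda>n. (real (q n) - real i + 1) / (real (q n) - real (p n))) \<longlonglongrightarrow> 1"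
  shows "(beta_dual X \<subseteq> d_dual p q X \<and> d_dual p q X \<subseteq> db_dual p q X
           \<and> db_dual p q X \<subseteq> f_dual X T)
         \<and> (sigmaK_space p q X T \<longrightarrow> f_dual X T = d_dual p q X)
         \<and> (AD_space X T \<longrightarrow> db_dual p q X = d_dual p q X)"
proof -
  have len: "filterlim (\<lambda>n. q n - p n) at_top sequentially"
    using window_length_tendsto[OF pq qinf lim] .
  have d_db: "d_dual p q X \<subseteq> db_dual p q X"
    by (rule d_dual_subset_db_dual)
  have db_f: "db_dual p q X \<subseteq> f_dual X T"
    by (rule db_dual_subset_f_dual[OF FK phiX len])
  show ?thesis
  proof (intro conjI impI)
    show "beta_dual X \<subseteq> d_dual p q X"
      by (rule beta_dual_subset_d_dual[OF len])
    show "f_dual X T = d_dual p q X" if "sigmaK_space p q X T"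
      using f_dual_subset_d_dual[OF FK phiX that] d_db db_f by (rule subset_antisym[OF _ order_trans])
    show "db_dual p q X = d_dual p q X" if "AD_space X T"
      using db_dual_subset_d_dual[OF FK phiX that len] d_db by (rule subset_antisym)
  qed fact+
qed

end
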